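(* If $g\in\mathcal{G}_0^0\cup\mathcal{G}_0^{sh}$, then for every finite measurable partition $\mathcal{P}$ we have $h(g,\mathcal{P})=C(g)\cdot h(\mathcal{P})$. Here $C(g)=\lim_{x\to0^+}g(x)/\eta(x)$ and $h(\mathcal{P})=h(\eta,\mathcal{P})$ is the Shannon dynamical entropy.
   Context: $\mathcal{G}_0$ is the set of concave functions $g:[0,1]\to\mathbb{R}$ with $g(0)=\lim_{x\to0^+}g(x)=0$. Let $\eta(x)=-x\log x$ and $\eta(0)=0$. Define $\mathcal{G}_0^0=\{g\in\mathcal{G}_0:\lim_{x\to0^+}g(x)/\eta(x)=0\}$ and $\mathcal{G}_0^{sh}=\{g\in\mathcal{G}_0:0<\lim_{x\to0^+}g(x)/\eta(x)<\infty\}$. $T$ is a measure-preserving map of a probability space $(X,\Sigma,\mu)$. For a finite measurable partition $\mathcal{P}$, let $\mathcal{P}_n=\bigvee_{i=0}^{n-1}T^{-i}\mathcal{P}$, $H(g,\mathcal{P})=\sum_{A\in\mathcal{P}}g(\mu(A))$, and $h(g,\mathcal{P})=\limsup_{n\to\infty}\frac1nH(g,\mathcal{P}_n)$. *)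

theory Defs
  imports "HOL-Probability.Probability"
begin

definition eta :: "real \<Rightarrow> real" where
  "eta x = (if x = 0 then 0 else - x * ln x)"

definition G0 :: "(real \<Rightarrow> real) set" where
  "G0 = {g. concave_on {0..1} g \<and> g 0 = 0 \<and> (g \<longlongrightarrow> 0) (at_right 0)}"

definition G00 :: "(real \<Rightarrow> real) set" where
  "G00 = {g \<in> G0. ((\<lambda>x. g x / eta x) \<longlongrightarrow> 0) (at_right 0)}"

definition Gsh :: "(real \<Rightarrow> real) set" where
  "Gsh = {g \<in> G0. \<exists>c. 0 < c \<and> ((\<lambda>x. g x / eta x) \<longlongrightarrow> c) (at_right 0)}"

definition Cg :: "(real \<Rightarrow> real) \<Rightarrow> real" where
  "Cg g = Lim (at_right 0) (\<lambda>x. g x / eta x)"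

definition measure_preserving_map :: "'a measure \<Rightarrow> ('a \<Rightarrow> 'a) \<Rightarrow> bool" where
  "measure_preserving_map M T \<longleftrightarrow> T \<in> M \<rightarrow>\<^sub>M M \<and>
     (\<forall>A \<in> sets M. measure M (T -` A \<inter> space M) = measure M A)"

definition finite_meas_partition :: "'a measure \<Rightarrow> 'a set set \<Rightarrow> bool" where
  "finite_meas_partition M P \<longleftrightarrow> finite P \<and> P \<subseteq> sets M \<and> \<Union>P = space M \<and>
     disjoint P"

text \<open>P_n = join of T^{-i} P for i = 0..n-1 (sets are the intersections, empty ones included).\<close>
definition join_part :: "'a measure \<Rightarrow> ('a \<Rightarrow> 'a) \<Rightarrow> 'a set set \<Rightarrow> nat \<Rightarrow> 'a set set" where
  "join_part M T P n = {space M \<inter> (\<Inter>i<n. (T ^^ i) -` (f i)) | f. \<forall>i<n. f i \<in> P}"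

definition Hg :: "'a measure \<Rightarrow> (real \<Rightarrow> real) \<Rightarrow> 'a set set \<Rightarrow> real" where
  "Hg M g P = (\<Sum>A\<in>P. g (measure M A))"

definition hg :: "'a measure \<Rightarrow> ('a \<Rightarrow> 'a) \<Rightarrow> (real \<Rightarrow> real) \<Rightarrow> 'a set set \<Rightarrow> ereal" where
  "hg M T g P = limsup (\<lambda>n. ereal (Hg M g (join_part M T P n) / real n))"

end

theory Submission
  imports Defs
begin

text \<open>
  Near 0 the function g behaves like C(g) \<eta>, and away from 0 both are bounded; by concavity this
  gives, for every \<epsilon> > 0, a constant L with |g x - C(g) \<eta>(x)| \<le> \<epsilon> \<eta>(x) + L x on [0,1].
  Summing over the cells of \<P>_n, whose measures add up to at most 1, yields
  |H(g,\<P>_n) - C(g) H(\<P>_n)| \<le> \<epsilon> H(\<P>_n) + L. Since H(\<P>_n) \<le> n log |\<P>| + 1 grows at most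
  linearly, dividing by n shows that H(g,\<P>_n)/n - C(g) H(\<P>_n)/n tends to 0, so both sequences
  have proportional upper limits.
\<close>

lemma eta_nonneg: "0 \<le> x \<Longrightarrow> x \<le> 1 \<Longrightarrow> 0 \<le> eta x"
  unfolding eta_def using ln_le_zero_iff[of x] by (auto simp: mult_nonneg_nonpos)

lemma eta_pos: "0 < x \<Longrightarrow> x < 1 \<Longrightarrow> 0 < eta x"
  unfolding eta_def by (simp add: mult_pos_neg)

lemma eta_le_one:
  assumes "0 \<le> x"
  shows "eta x \<le> 1"
proof (cases "x = 0")
  case False
  with assms have x: "x > 0" by simp
  have "- ln x \<le> 1 / x - 1"
    using ln_le_minus_one[of "1 / x"] x by (simp add: ln_div)
  hence "x * (- ln x) \<le> x * (1 / x - 1)"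
    using x by (intro mult_left_mono) auto
  also have "\<dots> = 1 - x" using x by (simp add: field_simps)
  finally show ?thesis using x by (simp add: eta_def)
qed (simp add: eta_def)

lemma eta_le_mult_ln:
  assumes "0 \<le> x" "0 < k"
  shows "eta x \<le> x * ln k + 1 / k"
proof (cases "x = 0")
  case False
  with assms have x: "x > 0" by simp
  have "eta (k * x) / k \<le> 1 / k"
    using assms eta_le_one[of "k * x"] by (intro divide_right_mono) auto
  moreover have "eta (k * x) / k = eta x - x * ln k"
    using x assms by (simp add: eta_def ln_mult field_simps)
  ultimately show ?thesis by simp
qed (use assms in \<open>simp add: eta_def\<close>)

lemma sum_eta_le_ln_card:
  assumes "finite Q" "Q \<noteq> {}" "\<And>A. A \<in> Q \<Longrightarrow> 0 \<le> m A" "(\<Sum>A\<in>Q. m A) \<le> 1"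
  shows "(\<Sum>A\<in>Q. eta (m A)) \<le> ln (card Q) + 1"
proof -
  define k where "k = real (card Q)"
  have k: "k \<ge> 1" using assms by (simp add: k_def Suc_leI card_gt_0_iff)
  have "(\<Sum>A\<in>Q. eta (m A)) \<le> (\<Sum>A\<in>Q. m A * ln k + 1 / k)"
    using k assms by (intro sum_mono eta_le_mult_ln) auto
  also have "\<dots> = (\<Sum>A\<in>Q. m A) * ln k + 1"
    using k by (simp add: sum.distrib sum_distrib_right k_def)
  also have "\<dots> \<le> 1 * ln k + 1"
    using k assms by (intro add_right_mono mult_right_mono) auto
  finally show ?thesis by (simp add: k_def)
qed

lemma concave_on_abs_le:
  assumes "concave_on {0..1} g" "g 0 = 0" "0 < d" "d < 1" "d \<le> x" "x \<le> 1"
  shows "\<bar>g x\<bar> \<le> \<bar>g d\<bar> / d + \<bar>g 1\<bar>"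
proof -
  have x: "x > 0" using assms by simp
  have "(1 - d/x) * g 0 + (d/x) * g x \<le> g ((1 - d/x) *\<^sub>R 0 + (d/x) *\<^sub>R x)"
    using assms x by (intro concave_onD[OF assms(1)]) auto
  hence "d * g x \<le> x * g d" using x assms by (simp add: field_simps)
  also have "\<dots> \<le> \<bar>g d\<bar>"
    using x assms by (metis abs_ge_self abs_mult abs_of_pos mult_left_le_one_le abs_ge_zero
        order_trans)
  finally have upper: "g x \<le> \<bar>g d\<bar> / d" using assms by (simp add: field_simps)
  define t where "t = (x - d) / (1 - d)"
  have t: "0 \<le> t" "t \<le> 1" using assms by (auto simp: t_def field_simps)
  have "t * (1 - d) = x - d" using assms by (simp add: t_def)
  hence "(1 - t) *\<^sub>R d + t *\<^sub>R 1 = x" by (simp add: algebra_simps)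
  hence "(1 - t) * g d + t * g 1 \<le> g x"
    using concave_onD[OF assms(1) t, of d 1] assms by auto
  moreover have "\<bar>(1 - t) * g d\<bar> \<le> \<bar>g d\<bar>" "\<bar>t * g 1\<bar> \<le> \<bar>g 1\<bar>"
    using t by (simp_all add: abs_mult mult_left_le_one_le)
  moreover have "\<bar>g d\<bar> \<le> \<bar>g d\<bar> / d"
    using assms by (simp add: le_divide_eq mult_right_le_one_le)
  ultimately show ?thesis using upper by linarith
qed

text \<open>
  Below a threshold d the ratio g/\<eta> is within \<epsilon> of c; on [d,1] the concavity bound on |g|
  is absorbed into L x because x \<ge> d.
\<close>
lemma G0_eta_approx:
  assumes "g \<in> G0" "((\<lambda>x. g x / eta x) \<longlongrightarrow> c) (at_right 0)" "e > 0"
  obtains L where "\<And>x. x \<in> {0..1} \<Longrightarrow> \<bar>g x - c * eta x\<bar> \<le> e * eta x + L * x"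
proof -
  have conc: "concave_on {0..1} g" and g0: "g 0 = 0" using assms(1) by (auto simp: G0_def)
  obtain b where b: "b > 0" "\<And>y. y > 0 \<Longrightarrow> y < b \<Longrightarrow> \<bar>g y / eta y - c\<bar> < e"
    using tendstoD[OF assms(2,3)] by (auto simp: eventually_at_right_field dist_real_def)
  define d where "d = min b (1/2)"
  have d: "0 < d" "d < 1" "d \<le> b" using b by (auto simp: d_def)
  define K where "K = \<bar>g d\<bar> / d + \<bar>g 1\<bar> + \<bar>c\<bar>"
  have K: "K \<ge> 0" using d by (simp add: K_def)
  show ?thesis
  proof
    fix x :: real assume x: "x \<in> {0..1}"
    have eta_x: "0 \<le> eta x" "eta x \<le> 1" using x eta_nonneg eta_le_one by auto
    have Kx: "0 \<le> K / d * x" using K d x by simp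
    consider "x = 0" | "0 < x" "x < d" | "d \<le> x" using x by force
    then show "\<bar>g x - c * eta x\<bar> \<le> e * eta x + K / d * x"
    proof cases
      case 1
      thus ?thesis using g0 by (simp add: eta_def)
    next
      case 2
      have pos: "eta x > 0" using 2 d by (intro eta_pos) auto
      have "\<bar>g x - c * eta x\<bar> = eta x * \<bar>g x / eta x - c\<bar>"
        using pos by (simp add: abs_mult [symmetric] field_simps)
      also have "\<dots> \<le> eta x * e"
        using b(2)[of x] 2 d pos by (intro mult_left_mono) auto
      finally show ?thesis using Kx by (simp add: mult.commute)
    next
      case 3
      have "\<bar>g x\<bar> \<le> \<bar>g d\<bar> / d + \<bar>g 1\<bar>"
        using concave_on_abs_le[OF conc g0 d(1,2) 3] x by auto
      moreover have "\<bar>c * eta x\<bar> \<le> \<bar>c\<bar>"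
        using eta_x by (simp add: abs_mult mult_right_le_one_le)
      ultimately have "\<bar>g x - c * eta x\<bar> \<le> K" unfolding K_def by linarith
      also have "K \<le> K / d * x"
        using K 3 d mult_left_mono[of 1 "x / d" K] by simp
      finally show ?thesis using eta_x assms(3) by (simp add: add_increasing)
    qed
  qed
qed

lemma tendsto_zero_of_eps_bound:
  fixes u :: "nat \<Rightarrow> real"
  assumes "\<And>e. e > 0 \<Longrightarrow> \<exists>L. \<forall>n>0. \<bar>u n\<bar> \<le> e + L / real n"
  shows "u \<longlonglongrightarrow> 0"
  unfolding tendsto_iff
proof (intro allI impI)
  fix r :: real assume r: "r > 0"
  then obtain L where L: "\<And>n. n > 0 \<Longrightarrow> \<bar>u n\<bar> \<le> r / 2 + L / real n"
    using assms[of "r / 2"] by auto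
  have "eventually (\<lambda>n. L / real n < r / 2) sequentially"
    using r by (intro order_tendstoD(2)[OF lim_const_over_n]) simp
  moreover have "eventually (\<lambda>n. n > (0::nat)) sequentially"
    by (rule eventually_gt_at_top)
  ultimately show "eventually (\<lambda>n. dist (u n) 0 < r) sequentially"
  proof eventually_elim
    case (elim n)
    with L[of n] show ?case unfolding dist_real_def by linarith
  qed
qed

lemma limsup_rate_eq_mult:
  fixes x y :: "nat \<Rightarrow> real"
  assumes "0 \<le> c" "\<And>n. 0 \<le> y n" "\<And>n. y n \<le> B * real n"
    and "\<And>e. e > 0 \<Longrightarrow> \<exists>L. \<forall>n. \<bar>x n - c * y n\<bar> \<le> e * y n + L"
  shows "limsup (\<lambda>n. ereal (x n / real n)) = ereal c * limsup (\<lambda>n. ereal (y n / real n))"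
proof -
  have B: "B \<ge> 0" using assms(2,3)[of 1] by simp
  have "(\<lambda>n. x n / real n - c * (y n / real n)) \<longlonglongrightarrow> 0"
  proof (rule tendsto_zero_of_eps_bound)
    fix e :: real assume "e > 0"
    then obtain L where L: "\<And>n. \<bar>x n - c * y n\<bar> \<le> e / (B + 1) * y n + L"
      using assms(4)[of "e / (B + 1)"] B by auto
    have "\<bar>x n / real n - c * (y n / real n)\<bar> \<le> e + L / real n" if "n > 0" for n
    proof -
      have "e / (B + 1) * y n \<le> e / (B + 1) * ((B + 1) * real n)"
        using assms(3)[of n] \<open>e > 0\<close> B by (intro mult_left_mono) (auto simp: algebra_simps)
      hence "\<bar>x n - c * y n\<bar> \<le> e * real n + L" using L[of n] B by simp
      hence "\<bar>x n - c * y n\<bar> / real n \<le> (e * real n + L) / real n"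
        by (intro divide_right_mono) auto
      thus ?thesis using that by (simp add: field_simps)
    qed
    thus "\<exists>L. \<forall>n>0. \<bar>x n / real n - c * (y n / real n)\<bar> \<le> e + L / real n" by blast
  qed
  hence diff: "(\<lambda>n. ereal (x n / real n - c * (y n / real n))) \<longlonglongrightarrow> ereal 0"
    by (simp add: tendsto_ereal)
  have "limsup (\<lambda>n. ereal (x n / real n))
      = limsup (\<lambda>n. ereal (x n / real n - c * (y n / real n)) + ereal c * ereal (y n / real n))"
    by simp
  also have "\<dots> = ereal 0 + limsup (\<lambda>n. ereal c * ereal (y n / real n))"
    by (rule ereal_limsup_lim_add[OF diff]) simp
  also have "\<dots> = ereal c * limsup (\<lambda>n. ereal (y n / real n))"
    unfolding zero_ereal_def[symmetric] add.left_neutral by (rule limsup_ereal_mult_left[OF assms(1)])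
  finally show ?thesis .
qed

lemma join_part_eq_image_PiE:
  "join_part M T P n = (\<lambda>f. space M \<inter> (\<Inter>i<n. (T ^^ i) -` f i)) ` (\<Pi>\<^sub>E i\<in>{..<n}. P)"
proof (intro equalityI subsetI)
  fix A assume "A \<in> join_part M T P n"
  then obtain f where A: "A = space M \<inter> (\<Inter>i<n. (T ^^ i) -` f i)" and f: "\<forall>i<n. f i \<in> P"
    unfolding join_part_def by blast
  have "A = space M \<inter> (\<Inter>i<n. (T ^^ i) -` restrict f {..<n} i)" using A by simp
  moreover have "restrict f {..<n} \<in> (\<Pi>\<^sub>E i\<in>{..<n}. P)" using f by simp
  ultimately show "A \<in> (\<lambda>f. space M \<inter> (\<Inter>i<n. (T ^^ i) -` f i)) ` (\<Pi>\<^sub>E i\<in>{..<n}. P)"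
    by (intro rev_image_eqI)
qed (auto simp: join_part_def PiE_def Pi_def)

lemma join_part_finite: "finite P \<Longrightarrow> finite (join_part M T P n)"
  by (simp add: join_part_eq_image_PiE finite_PiE)

lemma card_join_part_le:
  assumes "finite P"
  shows "card (join_part M T P n) \<le> card P ^ n"
proof -
  have "card (join_part M T P n) \<le> card (\<Pi>\<^sub>E i\<in>{..<n}. P)"
    unfolding join_part_eq_image_PiE using assms by (intro card_image_le finite_PiE) auto
  also have "\<dots> = card P ^ n" by (simp add: card_PiE)
  finally show ?thesis .
qed

lemma measurable_funpow: "T \<in> M \<rightarrow>\<^sub>M M \<Longrightarrow> T ^^ i \<in> M \<rightarrow>\<^sub>M M"
  by (induction i) (auto intro: measurable_comp)

lemma join_part_sets:
  assumes "T \<in> M \<rightarrow>\<^sub>M M" "P \<subseteq> sets M"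
  shows "join_part M T P n \<subseteq> sets M"
proof
  fix A assume "A \<in> join_part M T P n"
  then obtain f where f: "A = space M \<inter> (\<Inter>i<n. (T ^^ i) -` f i)" "\<forall>i<n. f i \<in> P"
    unfolding join_part_def by auto
  show "A \<in> sets M"
  proof (cases "n = 0")
    case False
    have "A = (\<Inter>i<n. (T ^^ i) -` f i \<inter> space M)" using f(1) False by auto
    also have "\<dots> \<in> sets M"
      using measurable_funpow[OF assms(1)] f(2) assms(2) False
      by (intro sets.countable_INT' measurable_sets) auto
    finally show ?thesis .
  qed (use f(1) in simp)
qed

lemma join_part_disjoint:
  assumes "disjoint P"
  shows "disjoint (join_part M T P n)"
  unfolding disjoint_def
proof (intro ballI impI)
  fix A B assume "A \<in> join_part M T P n" "B \<in> join_part M T P n" "A \<noteq> B"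
  then obtain f f' where f: "A = space M \<inter> (\<Inter>i<n. (T ^^ i) -` f i)" "\<forall>i<n. f i \<in> P"
    and f': "B = space M \<inter> (\<Inter>i<n. (T ^^ i) -` f' i)" "\<forall>i<n. f' i \<in> P"
    unfolding join_part_def by auto
  with \<open>A \<noteq> B\<close> obtain i where i: "i < n" "f i \<noteq> f' i" by force
  have "f i \<inter> f' i = {}" using assms f(2) f'(2) i unfolding disjoint_def by auto
  moreover have "A \<subseteq> (T ^^ i) -` f i" "B \<subseteq> (T ^^ i) -` f' i" using f f' i by auto
  ultimately show "A \<inter> B = {}" by auto
qed

lemma join_part_sum_measure_le_one:
  assumes "prob_space M" "T \<in> M \<rightarrow>\<^sub>M M" "finite_meas_partition M P"
  shows "(\<Sum>A\<in>join_part M T P n. measure M A) \<le> 1"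
proof -
  interpret prob_space M by fact
  have P: "finite P" "P \<subseteq> sets M" "disjoint P" using assms(3) by (auto simp: finite_meas_partition_def)
  let ?Q = "join_part M T P n"
  have "(\<Sum>A\<in>?Q. measure M A) = measure M (\<Union>?Q)"
    using join_part_finite[OF P(1), of M T n] join_part_sets[OF assms(2) P(2), of n]
      join_part_disjoint[OF P(3), of M T n]
    by (intro measure_Union'[symmetric])
      (auto simp: fmeasurable_eq_sets disjoint_def pairwise_def disjnt_def)
  also have "\<dots> \<le> 1" by simp
  finally show ?thesis .
qed

lemma Hg_eta_nonneg:
  assumes "prob_space M"
  shows "0 \<le> Hg M eta Q"
proof -
  interpret prob_space M by fact
  show ?thesis unfolding Hg_def by (intro sum_nonneg eta_nonneg) auto
qed

lemma Hg_eta_join_part_le: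
  assumes "prob_space M" "T \<in> M \<rightarrow>\<^sub>M M" "finite_meas_partition M P"
  shows "Hg M eta (join_part M T P n) \<le> (\<bar>ln (card P)\<bar> + 1) * real n"
proof -
  let ?Q = "join_part M T P n"
  have P: "finite P" using assms(3) by (simp add: finite_meas_partition_def)
  consider "n = 0" | "?Q = {}" | "n > 0" "?Q \<noteq> {}" by blast
  then show ?thesis
  proof cases
    case 1
    then have "?Q = {space M}" by (auto simp: join_part_def)
    with assms(1) show ?thesis by (simp add: Hg_def eta_def prob_space.prob_space)
  next
    case 2
    then show ?thesis by (simp add: Hg_def)
  next
    case 3
    have card_Q: "1 \<le> card ?Q" "card ?Q \<le> card P ^ n"
      using 3 join_part_finite[OF P] card_join_part_le[OF P] by (auto simp: Suc_le_eq)
    hence "card P > 0" using 3 by (cases "card P = 0") (auto simp: power_0_left)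
    have "Hg M eta ?Q \<le> ln (card ?Q) + 1"
      unfolding Hg_def using 3 join_part_finite[OF P] join_part_sum_measure_le_one[OF assms]
      by (intro sum_eta_le_ln_card) auto
    also have "ln (card ?Q) \<le> ln (card P ^ n)"
      using card_Q \<open>card P > 0\<close> by (subst ln_le_cancel_iff) (auto simp del: of_nat_power)
    also have "\<dots> \<le> \<bar>ln (card P)\<bar> * real n"
      using \<open>card P > 0\<close> by (simp add: ln_realpow mult.commute mult_right_mono)
    finally show ?thesis using 3 by (simp add: algebra_simps)
  qed
qed

lemma abs_Hg_sub_mult_eta_le:
  assumes "finite Q" "(\<Sum>A\<in>Q. measure M A) \<le> 1"
    and approx: "\<And>x. x \<in> {0..1} \<Longrightarrow> \<bar>g x - c * eta x\<bar> \<le> e * eta x + L * x"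
  shows "\<bar>Hg M g Q - c * Hg M eta Q\<bar> \<le> e * Hg M eta Q + \<bar>L\<bar>"
proof -
  have m01: "measure M A \<in> {0..1}" if "A \<in> Q" for A
    using member_le_sum[OF that, of "measure M"] assms(1,2) by auto
  have "\<bar>Hg M g Q - c * Hg M eta Q\<bar> \<le> (\<Sum>A\<in>Q. \<bar>g (measure M A) - c * eta (measure M A)\<bar>)"
    unfolding Hg_def sum_distrib_left sum_subtractf[symmetric] by (rule sum_abs)
  also have "\<dots> \<le> (\<Sum>A\<in>Q. e * eta (measure M A) + \<bar>L\<bar> * measure M A)"
  proof (rule sum_mono)
    fix A assume "A \<in> Q"
    hence "L * measure M A \<le> \<bar>L\<bar> * measure M A" using m01 by (intro mult_right_mono) auto
    with approx[OF m01[OF \<open>A \<in> Q\<close>]]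
    show "\<bar>g (measure M A) - c * eta (measure M A)\<bar> \<le> e * eta (measure M A) + \<bar>L\<bar> * measure M A"
      by linarith
  qed
  also have "\<dots> = e * Hg M eta Q + \<bar>L\<bar> * (\<Sum>A\<in>Q. measure M A)"
    unfolding Hg_def by (simp add: sum.distrib sum_distrib_left)
  also have "\<dots> \<le> e * Hg M eta Q + \<bar>L\<bar>"
    using assms(2) by (simp add: mult_left_le)
  finally show ?thesis .
qed

theorem mainTheorem5:
  fixes M :: "'a measure" and T :: "'a \<Rightarrow> 'a" and g :: "real \<Rightarrow> real" and P :: "'a set set"
  assumes "prob_space M"
    and "measure_preserving_map M T"
    and "g \<in> G00 \<union> Gsh"
    and "finite_meas_partition M P"
  shows "hg M T g P = ereal (Cg g) * hg M T eta P"
proof -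
  have T: "T \<in> M \<rightarrow>\<^sub>M M" using assms(2) by (simp add: measure_preserving_map_def)
  obtain c where c: "0 \<le> c" "g \<in> G0" "((\<lambda>x. g x / eta x) \<longlongrightarrow> c) (at_right 0)"
    using assms(3) unfolding G00_def Gsh_def by (auto intro: less_imp_le)
  have "Cg g = c" unfolding Cg_def by (rule tendsto_Lim[OF trivial_limit_at_right_real c(3)])
  let ?Q = "join_part M T P"
  have "limsup (\<lambda>n. ereal (Hg M g (?Q n) / real n))
      = ereal c * limsup (\<lambda>n. ereal (Hg M eta (?Q n) / real n))"
  proof (rule limsup_rate_eq_mult[OF c(1) Hg_eta_nonneg[OF assms(1)]
        Hg_eta_join_part_le[OF assms(1) T assms(4)]])
    fix e :: real assume "e > 0"
    then obtain L where L: "\<And>x. x \<in> {0..1} \<Longrightarrow> \<bar>g x - c * eta x\<bar> \<le> e * eta x + L * x"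
      using G0_eta_approx[OF c(2,3)] by blast
    have "finite P" using assms(4) by (simp add: finite_meas_partition_def)
    show "\<exists>L. \<forall>n. \<bar>Hg M g (?Q n) - c * Hg M eta (?Q n)\<bar> \<le> e * Hg M eta (?Q n) + L"
      using abs_Hg_sub_mult_eta_le[OF join_part_finite[OF \<open>finite P\<close>]
          join_part_sum_measure_le_one[OF assms(1) T assms(4)] L] by blast
  qed
  thus ?thesis using \<open>Cg g = c\<close> by (simp add: hg_def)
qed

end
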